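(* Let $d\ge2$, $\gamma\ge2d$, $v\in\mathcal R_\infty^{(\gamma)}$, and let $h\in\ell^\infty(\mathbb Z^d,\mathbb Z)$ satisfy $M_h:=\max_{\mathbf m}h_{\mathbf m}>0$ and $v+f^{(d,\gamma)}\cdot h\in\mathcal R^{(\gamma)}_\infty$. Then every connected component of $\mathcal S_{\max}(h)=\{\mathbf n\in\mathbb Z^d:h_{\mathbf n}=M_h\}$ is infinite.
   Context: $f^{(d,\gamma)}=\gamma-\sum_{i=1}^d(u_i+u_i^{-1})$, acting on $h\in\ell^\infty(\mathbb Z^d,\mathbb Z)$ by $(f^{(d,\gamma)}\cdot h)_{\mathbf n}=\gamma h_{\mathbf n}-\sum_i(h_{\mathbf n+\mathbf e^{(i)}}+h_{\mathbf n-\mathbf e^{(i)}})$. For nonempty $F\subset\mathbb Z^d$, $\mathsf N_F(\mathbf n)=|F\cap\{\mathbf n\pm\mathbf e^{(i)}\}|$. $\mathcal R^{(\gamma)}_\infty=\{v\in\{0,\dots,\gamma-1\}^{\mathbb Z^d}:$ for every finite nonempty $F\subset\mathbb Z^d$ there is $\mathbf n\in F$ with $v_{\mathbf n}\ge\mathsf N_F(\mathbf n)\}$. A set $S\subset\mathbb Z^d$ is connected if any two points of $S$ are joined by a path $p(0),\dots,p(k)$ in $S$ with $\|p(j)-p(j-1)\|_{\max}=1$. *)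

theory Defs
  imports Main
begin

text \<open>Points of Z^d are represented as functions nat => int vanishing at all
indices >= d. Configurations are functions on such points; only their values
on the lattice matter.\<close>

type_synonym pt = "nat \<Rightarrow> int"

definition lattice :: "nat \<Rightarrow> pt set" where
  "lattice d = {n. \<forall>i\<ge>d. n i = 0}"

definition unitv :: "nat \<Rightarrow> pt" where
  "unitv i = (\<lambda>j. if j = i then 1 else 0)"

definition shift :: "pt \<Rightarrow> int \<Rightarrow> nat \<Rightarrow> pt" where
  "shift n s i = (\<lambda>j. n j + s * unitv i j)"

definition bounded_conf :: "nat \<Rightarrow> (pt \<Rightarrow> int) \<Rightarrow> bool" where
  "bounded_conf d h \<longleftrightarrow> (\<exists>B. \<forall>n\<in>lattice d. \<bar>h n\<bar> \<le> B)"

text \<open>Action of f^(d,gamma) = gamma - sum_i (u_i + u_i^-1).\<close>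
definition f_act :: "nat \<Rightarrow> int \<Rightarrow> (pt \<Rightarrow> int) \<Rightarrow> pt \<Rightarrow> int" where
  "f_act d \<gamma> h n = \<gamma> * h n - (\<Sum>i<d. h (shift n 1 i) + h (shift n (-1) i))"

definition nbrs :: "nat \<Rightarrow> pt \<Rightarrow> pt set" where
  "nbrs d n = {shift n 1 i | i. i < d} \<union> {shift n (-1) i | i. i < d}"

definition NF :: "nat \<Rightarrow> pt set \<Rightarrow> pt \<Rightarrow> nat" where
  "NF d F n = card (F \<inter> nbrs d n)"

definition R_inf :: "nat \<Rightarrow> int \<Rightarrow> (pt \<Rightarrow> int) set" where
  "R_inf d \<gamma> = {v. (\<forall>n\<in>lattice d. 0 \<le> v n \<and> v n \<le> \<gamma> - 1) \<and>
     (\<forall>F. F \<subseteq> lattice d \<and> finite F \<and> F \<noteq> {} \<longrightarrow> (\<exists>n\<in>F. v n \<ge> int (NF d F n)))}"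

definition Mh :: "nat \<Rightarrow> (pt \<Rightarrow> int) \<Rightarrow> int" where
  "Mh d h = Max (h ` lattice d)"

definition Smax :: "nat \<Rightarrow> (pt \<Rightarrow> int) \<Rightarrow> pt set" where
  "Smax d h = {n \<in> lattice d. h n = Mh d h}"

definition adj_in :: "pt set \<Rightarrow> pt \<Rightarrow> pt \<Rightarrow> bool" where
  "adj_in S p q \<longleftrightarrow> p \<in> S \<and> q \<in> S \<and> p \<noteq> q \<and> (\<forall>i. \<bar>p i - q i\<bar> \<le> 1)"

definition component :: "pt set \<Rightarrow> pt \<Rightarrow> pt set" where
  "component S x = {y. (adj_in S)\<^sup>*\<^sup>* x y}"

end

theory Submission
  imports Defs
begin

text \<open>
  Let \<open>M = max h > 0\<close> and suppose a connected
  component \<open>C\<close> of the maximum set \<open>Smax d h\<close> were finite.  Since \<open>v \<in> R_inf\<close>, some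
  \<open>n \<in> C\<close> has \<open>v n \<ge> N_C(n)\<close>.  A neighbour of \<open>n\<close> lying in \<open>C\<close> has height \<open>M\<close>; a neighbour
  not in \<open>C\<close> is not a maximum point (otherwise it would belong to the component), so its
  height is at most \<open>M - 1\<close>.  Hence the neighbour sum at \<open>n\<close> is at most
  \<open>2d(M - 1) + N_C(n)\<close>, and
    \<open>v n + (f \<cdot> h) n \<ge> N_C(n) + \<gamma>M - 2d(M - 1) - N_C(n) = (\<gamma> - 2d)M + 2d \<ge> \<gamma>\<close>,
  contradicting \<open>v + f \<cdot> h \<in> R_inf\<close>, whose values are at most \<open>\<gamma> - 1\<close>.
\<close>

lemma shift_apply: "shift n s i j = n j + (if j = i then s else 0)"
  by (simp add: shift_def unitv_def)

lemma shift_inj: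
  assumes "shift n s i = shift n s i'" "s \<noteq> 0"
  shows "i = i'"
proof -
  have "shift n s i i = shift n s i' i" using assms(1) by simp
  thus ?thesis using assms(2) by (simp add: shift_apply split: if_splits)
qed

lemma shift_plus_ne_minus: "shift n 1 i \<noteq> shift n (-1) i'"
proof
  assume "shift n 1 i = shift n (-1) i'"
  hence "shift n 1 i i = shift n (-1) i' i" by simp
  thus False by (simp add: shift_apply split: if_splits)
qed

lemma shift_in_lattice: "n \<in> lattice d \<Longrightarrow> i < d \<Longrightarrow> shift n s i \<in> lattice d"
  by (simp add: lattice_def shift_apply)

lemma adj_in_shift:
  assumes "n \<in> S" "shift n s i \<in> S" "\<bar>s\<bar> = 1"
  shows "adj_in S n (shift n s i)"
proof -
  have "n i \<noteq> shift n s i i" using assms(3) by (auto simp: shift_apply)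
  hence "n \<noteq> shift n s i" by metis
  thus ?thesis using assms by (auto simp: adj_in_def shift_apply)
qed

lemma component_subset: "x \<in> S \<Longrightarrow> component S x \<subseteq> S"
proof
  fix y assume "x \<in> S" "y \<in> component S x"
  hence "(adj_in S)\<^sup>*\<^sup>* x y" by (simp add: component_def)
  thus "y \<in> S" using \<open>x \<in> S\<close> by (induction rule: rtranclp_induct) (auto simp: adj_in_def)
qed

lemma component_self: "x \<in> component S x"
  by (simp add: component_def)

lemma component_closed_shift:
  assumes "x \<in> S" "n \<in> component S x" "shift n s i \<in> S" "\<bar>s\<bar> = 1"
  shows "shift n s i \<in> component S x"
proof -
  have "adj_in S n (shift n s i)"
    using adj_in_shift component_subset assms by blast
  thus ?thesis using assms(2) by (auto simp: component_def intro: rtranclp.rtrancl_into_rtrancl)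
qed

lemma Mh_upper:
  assumes "bounded_conf d h" "m \<in> lattice d"
  shows "h m \<le> Mh d h"
proof -
  obtain B where "\<forall>n\<in>lattice d. \<bar>h n\<bar> \<le> B" using assms(1) bounded_conf_def by blast
  hence "h ` lattice d \<subseteq> {-B..B}" by (auto simp: abs_le_iff)
  hence "finite (h ` lattice d)" by (rule finite_subset) simp
  thus ?thesis using assms(2) by (simp add: Mh_def)
qed

lemma NF_as_sum:
  "int (NF d F n) = (\<Sum>i<d. of_bool (shift n 1 i \<in> F) + of_bool (shift n (-1) i \<in> F))"
proof -
  define A where "A = {i\<in>{..<d}. shift n 1 i \<in> F}"
  define A' where "A' = {i\<in>{..<d}. shift n (-1) i \<in> F}"
  have split: "F \<inter> nbrs d n = shift n 1 ` A \<union> shift n (-1) ` A'"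
    unfolding nbrs_def A_def A'_def by auto
  have "inj_on (shift n 1) A" "inj_on (shift n (-1)) A'"
    by (auto intro!: inj_onI dest: shift_inj)
  moreover have "shift n 1 ` A \<inter> shift n (-1) ` A' = {}"
    using shift_plus_ne_minus by blast
  moreover have "finite A" "finite A'" unfolding A_def A'_def by auto
  ultimately have "NF d F n = card A + card A'"
    unfolding NF_def split by (simp add: card_Un_disjoint card_image)
  moreover have "int (card A) = (\<Sum>i<d. of_bool (shift n 1 i \<in> F))"
    "int (card A') = (\<Sum>i<d. of_bool (shift n (-1) i \<in> F))"
    unfolding A_def A'_def by (simp_all add: of_bool_def sum.If_cases Int_def conj_commute)
  ultimately show ?thesis by (simp add: sum.distrib)
qed

lemma neighbour_sum_bound:
  fixes h :: "pt \<Rightarrow> int"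
  assumes "\<And>i s. i < d \<Longrightarrow> \<bar>s\<bar> = 1 \<Longrightarrow> h (shift n s i) \<le> M - 1 + of_bool (shift n s i \<in> F)"
  shows "(\<Sum>i<d. h (shift n 1 i) + h (shift n (-1) i)) \<le> 2 * int d * (M - 1) + int (NF d F n)"
proof -
  have "(\<Sum>i<d. h (shift n 1 i) + h (shift n (-1) i))
      \<le> (\<Sum>i<d. 2 * (M - 1) + (of_bool (shift n 1 i \<in> F) + of_bool (shift n (-1) i \<in> F)))"
    using assms[of _ 1] assms[of _ "-1"] by (intro sum_mono) fastforce
  also have "\<dots> = 2 * int d * (M - 1) + int (NF d F n)"
    by (simp add: sum.distrib NF_as_sum)
  finally show ?thesis .
qed

lemma height_near_max_component:
  assumes "bounded_conf d h" "x \<in> Smax d h" "n \<in> component (Smax d h) x" "i < d" "\<bar>s\<bar> = 1"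
  shows "h (shift n s i) \<le> Mh d h - 1 + of_bool (shift n s i \<in> component (Smax d h) x)"
proof -
  let ?m = "shift n s i"
  have "n \<in> lattice d" using component_subset[OF assms(2)] assms(3) by (auto simp: Smax_def)
  hence lat: "?m \<in> lattice d" using shift_in_lattice assms(4) by blast
  show ?thesis
  proof (cases "?m \<in> component (Smax d h) x")
    case True
    thus ?thesis using Mh_upper[OF assms(1) lat] by simp
  next
    case False
    hence "?m \<notin> Smax d h" using component_closed_shift assms(2,3,5) by blast
    hence "h ?m \<noteq> Mh d h" using lat by (simp add: Smax_def)
    thus ?thesis using Mh_upper[OF assms(1) lat] False by simp
  qed
qed

lemma f_act_at_max_component:
  assumes "bounded_conf d h" "x \<in> Smax d h" "n \<in> component (Smax d h) x"
  shows "f_act d \<gamma> h n \<ge> \<gamma> * Mh d h - 2 * int d * (Mh d h - 1) - int (NF d (component (Smax d h) x) n)"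
proof -
  have "h n = Mh d h" using component_subset[OF assms(2)] assms(3) by (auto simp: Smax_def)
  moreover have "(\<Sum>i<d. h (shift n 1 i) + h (shift n (-1) i))
      \<le> 2 * int d * (Mh d h - 1) + int (NF d (component (Smax d h) x) n)"
    using neighbour_sum_bound height_near_max_component[OF assms] by blast
  ultimately show ?thesis by (simp add: f_act_def)
qed

theorem corollary4p2:
  fixes d :: nat and \<gamma> :: int and v h :: "pt \<Rightarrow> int"
  assumes "d \<ge> 2" and "\<gamma> \<ge> 2 * int d"
    and "v \<in> R_inf d \<gamma>"
    and "bounded_conf d h"
    and "Mh d h > 0"
    and "(\<lambda>n. v n + f_act d \<gamma> h n) \<in> R_inf d \<gamma>"
  shows "\<forall>x\<in>Smax d h. infinite (component (Smax d h) x)"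
proof (intro ballI notI)
  fix x assume x: "x \<in> Smax d h" and fin: "finite (component (Smax d h) x)"
  define C where "C = component (Smax d h) x"
  have "C \<subseteq> lattice d" using component_subset[OF x] by (auto simp: C_def Smax_def)
  moreover have "C \<noteq> {}" using component_self C_def by blast
  ultimately obtain n where n: "n \<in> C" and vn: "v n \<ge> int (NF d C n)"
    using assms(3) fin unfolding R_inf_def C_def by blast
  have "n \<in> lattice d" using n \<open>C \<subseteq> lattice d\<close> by blast
  hence upper: "v n + f_act d \<gamma> h n \<le> \<gamma> - 1" using assms(6) by (simp add: R_inf_def)
  have "(\<gamma> - 2 * int d) * Mh d h \<ge> \<gamma> - 2 * int d"
    using assms(2,5) by (simp add: mult_le_cancel_left1)
  hence "v n + f_act d \<gamma> h n \<ge> \<gamma>"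
    using vn f_act_at_max_component[OF assms(4) x, of n \<gamma>] n
    by (simp add: C_def algebra_simps)
  with upper show False by simp
qed

end
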